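(* Suppose $v_{j1}^2+v_{j2}^2\neq0$ for $j=1$ and for $j=2$. Then, in the coordinates $[z_0,z_1,z_2,z_3,x]$, the points of $HC_F(\mathbf v,d)$ with $z_0z_1=0$ are exactly the eight points $[-1,0,1,0,0]$, $[0,-1,0,1,0]$, $[0,1,0,1,0]$, $[1,0,1,0,0]$, $[0,0,1,1,\sqrt{-1}]$, $[0,0,1,1,-\sqrt{-1}]$, $[0,0,1,-1,\sqrt{-1}]$, $[0,0,1,-1,-\sqrt{-1}]$. Equivalently, in the coordinates $[u,y_1,y_2,r_1,r_2]$, the set of points of $HC_F(\mathbf v,d)$ with $r_1r_2=0$ is this set of eight points.
   Context: On $\mathbb{C}P^4$ use homogeneous coordinates $[u,y_1,y_2,r_1,r_2]$ and the linearly equivalent coordinates $z_0=4r_1$, $z_1=4r_2$, $z_2=4(u-y_1)$, $z_3=-4(u+y_1)$, $x=-4y_2$. For parameters $[\mathbf v,d]=[v_{11},v_{12},v_{21},v_{22},d]\in\mathbb{C}P^4$ (complex, not all zero), $HC_F(\mathbf v,d)$ is defined by $z_2^2-z_0^2-(z_3^2-z_1^2)=0$, $x^2+z_2^2-z_0^2=0$, and $(v_{22}z_0-v_{12}z_1)x+v_{21}z_0z_3-v_{11}z_1z_2-dz_0z_1=0$; in the original coordinates these are $(u-y_1)^2+y_2^2=r_1^2$, $(u+y_1)^2+y_2^2=r_2^2$, and $L_2r_1-L_1r_2-dr_1r_2=0$ with $L_1=v_{11}(u-y_1)-v_{12}y_2$, $L_2=-v_{21}(u+y_1)-v_{22}y_2$.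 *)

theory Defs
  imports Complex_Main
begin

(* Points of CP^4 are represented by nonzero vectors of homogeneous coordinates
   in C^5; a projective point corresponds to the punctured line (cone) of its
   representatives.  Tuples are (z0,z1,z2,z3,x) resp. (u,y1,y2,r1,r2). *)
type_synonym hvec = "complex \<times> complex \<times> complex \<times> complex \<times> complex"

definition hscale :: "complex \<Rightarrow> hvec \<Rightarrow> hvec" where
  "hscale c p = (case p of (a0,a1,a2,a3,a4) \<Rightarrow> (c*a0, c*a1, c*a2, c*a3, c*a4))"

definition proj_cone :: "hvec set \<Rightarrow> hvec set" where
  "proj_cone S = {hscale c q | c q. c \<noteq> 0 \<and> q \<in> S}"

definition HCF :: "complex \<times> complex \<times> complex \<times> complex \<Rightarrow> complex \<Rightarrow> hvec set" where
  "HCF v d = (case v of (v11,v12,v21,v22) \<Rightarrow>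
     {(z0,z1,z2,z3,x). (z0,z1,z2,z3,x) \<noteq> (0,0,0,0,0) \<and>
        z2^2 - z0^2 - (z3^2 - z1^2) = 0 \<and>
        x^2 + z2^2 - z0^2 = 0 \<and>
        (v22*z0 - v12*z1)*x + v21*z0*z3 - v11*z1*z2 - d*z0*z1 = 0})"

definition to_z :: "hvec \<Rightarrow> hvec" where
  "to_z w = (case w of (u,y1,y2,r1,r2) \<Rightarrow> (4*r1, 4*r2, 4*(u-y1), -4*(u+y1), -4*y2))"

definition eight_pts :: "hvec set" where
  "eight_pts = {(-1,0,1,0,0), (0,-1,0,1,0), (0,1,0,1,0), (1,0,1,0,0),
                (0,0,1,1,\<i>), (0,0,1,1,-\<i>), (0,0,1,-1,\<i>), (0,0,1,-1,-\<i>)}"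

end

theory Submission
  imports Defs
begin

(* On z0 z1 = 0 the cubic equation of HC_F becomes linear.  If z0 \<noteq> 0, then z1 = 0 and it says
   that (z3, x) is orthogonal to (v21, v22), while the two quadrics force z3^2 + x^2 = 0; an
   isotropic vector orthogonal to the anisotropic vector (v21, v22) vanishes, so z3 = x = 0 and
   z2 = \<plusminus>z0.  Symmetrically z1 \<noteq> 0 gives z2 = x = 0 and z3 = \<plusminus>z1, and for z0 = z1 = 0 the
   quadrics alone give z3 = \<plusminus>z2, x = \<plusminus>i z2.  Dividing by z2 (or by z3 when z2 = 0) yields the
   eight points.  The second statement is the pullback along the linear isomorphism to_z, under
   which r1 r2 becomes z0 z1 / 16. *)

lemma isotropic_orthogonal_to_anisotropic:
  fixes a b z x :: "'a::idom"
  assumes "a^2 + b^2 \<noteq> 0" and "a*z + b*x = 0" and "z^2 + x^2 = 0"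
  shows "z = 0 \<and> x = 0"
proof -
  have "(a*z)^2 = (b*x)^2"
    using assms(2) by (simp add: eq_neg_iff_add_eq_0[symmetric])
  then have "(a^2 + b^2) * z^2 = b^2 * (z^2 + x^2)" "(a^2 + b^2) * x^2 = a^2 * (z^2 + x^2)"
    by (simp_all add: distrib_left distrib_right power_mult_distrib mult.commute)
  then show ?thesis
    using assms(1,3) by simp
qed

lemma power2_eq_minus_one_iff: "(y::complex)^2 = -1 \<longleftrightarrow> y = \<i> \<or> y = -\<i>"
  by (metis power2_eq_iff power2_i)

lemma proj_coneI: "c \<noteq> 0 \<Longrightarrow> hscale (inverse c) p \<in> S \<Longrightarrow> p \<in> proj_cone S"
  unfolding proj_cone_def
  by (rule CollectI, rule exI[of _ c], rule exI[of _ "hscale (inverse c) p"])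
    (auto simp: hscale_def split: prod.splits)

lemma HCF_z1_eq_0_imp_z3_x_eq_0:
  fixes v11 v12 v21 v22 d :: complex
  assumes "v21^2 + v22^2 \<noteq> 0" and "(z0,0,z2,z3,x) \<in> HCF (v11,v12,v21,v22) d" and "z0 \<noteq> 0"
  shows "z3 = 0 \<and> x = 0"
proof (rule isotropic_orthogonal_to_anisotropic[OF assms(1)])
  have quadrics: "z2^2 - z0^2 = z3^2" "x^2 + z2^2 = z0^2" and cubic: "v22*z0*x + v21*z0*z3 = 0"
    using assms(2) by (auto simp: HCF_def)
  from cubic have "z0 * (v21*z3 + v22*x) = 0"
    by (simp add: algebra_simps)
  then show "v21*z3 + v22*x = 0"
    using assms(3) by simp
  show "z3^2 + x^2 = 0"
    using quadrics by (simp add: algebra_simps)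
qed

lemma HCF_z0_eq_0_imp_z2_x_eq_0:
  fixes v11 v12 v21 v22 d :: complex
  assumes "v11^2 + v12^2 \<noteq> 0" and "(0,z1,z2,z3,x) \<in> HCF (v11,v12,v21,v22) d" and "z1 \<noteq> 0"
  shows "z2 = 0 \<and> x = 0"
proof (rule isotropic_orthogonal_to_anisotropic[OF assms(1)])
  have quadric: "x^2 + z2^2 = 0" and cubic: "- (v12*z1*x) - v11*z1*z2 = 0"
    using assms(2) by (auto simp: HCF_def)
  have "z1 * (v11*z2 + v12*x) = - (- (v12*z1*x) - v11*z1*z2)"
    by (simp add: algebra_simps)
  with cubic have "z1 * (v11*z2 + v12*x) = 0"
    by simp
  then show "v11*z2 + v12*x = 0"
    using assms(3) by simp
  show "z2^2 + x^2 = 0"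
    using quadric by (simp add: add.commute)
qed

lemma proj_cone_eight_ptsI:
  fixes v11 v12 v21 v22 d :: complex
  assumes v1: "v11^2 + v12^2 \<noteq> 0" and v2: "v21^2 + v22^2 \<noteq> 0"
    and p: "(z0,z1,z2,z3,x) \<in> HCF (v11,v12,v21,v22) d" and boundary: "z0*z1 = 0"
  shows "(z0,z1,z2,z3,x) \<in> proj_cone eight_pts"
proof -
  have nz: "(z0,z1,z2,z3,x) \<noteq> (0,0,0,0,0)"
    and e1: "z2^2 - z0^2 = z3^2 - z1^2" and e2: "x^2 + z2^2 = z0^2"
    using p by (auto simp: HCF_def)
  consider "z0 \<noteq> 0" "z1 = 0" | "z0 = 0" "z1 \<noteq> 0" | "z0 = 0" "z1 = 0"
    using boundary by auto
  then show ?thesis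
  proof cases
    case 1
    then have "z3 = 0" "x = 0"
      using HCF_z1_eq_0_imp_z3_x_eq_0[OF v2] p by auto
    have "z2 \<noteq> 0" "(z0/z2)^2 = 1"
      using e1 1 \<open>z3 = 0\<close> by (auto simp: power_divide)
    then have "hscale (inverse z2) (z0,z1,z2,z3,x) = (z0/z2, 0, 1, 0, 0)"
      and "(z0/z2, 0, 1, 0, 0) \<in> eight_pts"
      using 1 \<open>z3 = 0\<close> \<open>x = 0\<close>
      by (auto simp: hscale_def divide_inverse eight_pts_def power2_eq_1_iff)
    with \<open>z2 \<noteq> 0\<close> show ?thesis
      by (metis proj_coneI)
  next
    case 2
    then have "z2 = 0" "x = 0"
      using HCF_z0_eq_0_imp_z2_x_eq_0[OF v1] p by auto
    then have "z3 \<noteq> 0" "(z1/z3)^2 = 1"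
      using e1 2 by (auto simp: power_divide)
    then have "hscale (inverse z3) (z0,z1,z2,z3,x) = (0, z1/z3, 0, 1, 0)"
      and "(0, z1/z3, 0, 1, 0) \<in> eight_pts"
      using 2 \<open>z2 = 0\<close> \<open>x = 0\<close>
      by (auto simp: hscale_def divide_inverse eight_pts_def power2_eq_1_iff)
    with \<open>z3 \<noteq> 0\<close> show ?thesis
      by (metis proj_coneI)
  next
    case 3
    then have "z2 \<noteq> 0"
      using nz e1 e2 by auto
    moreover have "z3^2 = z2^2" "x^2 = - (z2^2)"
      using e1 e2 3 by (simp_all add: eq_neg_iff_add_eq_0)
    ultimately have "(z3/z2)^2 = 1" "(x/z2)^2 = -1"
      by (simp_all add: power_divide)
    then have "hscale (inverse z2) (z0,z1,z2,z3,x) = (0, 0, 1, z3/z2, x/z2)"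
      and "(0, 0, 1, z3/z2, x/z2) \<in> eight_pts"
      using 3 \<open>z2 \<noteq> 0\<close>
      by (auto simp: hscale_def divide_inverse eight_pts_def power2_eq_1_iff power2_eq_minus_one_iff)
    with \<open>z2 \<noteq> 0\<close> show ?thesis
      by (metis proj_coneI)
  qed
qed

lemma proj_cone_eight_ptsD:
  assumes "p \<in> proj_cone eight_pts"
  shows "p \<in> HCF (v11,v12,v21,v22) d \<and> fst p * fst (snd p) = 0"
proof -
  obtain c q where "p = hscale c q" "c \<noteq> 0" "q \<in> eight_pts"
    using assms unfolding proj_cone_def by blast
  then show ?thesis
    unfolding eight_pts_def
    by (elim insertE emptyE) (simp_all add: hscale_def HCF_def power_mult_distrib)
qed

lemma HCF_boundary_eq_proj_cone:
  fixes v11 v12 v21 v22 d :: complex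
  assumes "v11^2 + v12^2 \<noteq> 0" and "v21^2 + v22^2 \<noteq> 0"
  shows "{p \<in> HCF (v11,v12,v21,v22) d. fst p * fst (snd p) = 0} = proj_cone eight_pts"
proof (intro subset_antisym subsetI)
  fix p assume "p \<in> {p \<in> HCF (v11,v12,v21,v22) d. fst p * fst (snd p) = 0}"
  then show "p \<in> proj_cone eight_pts"
    by (cases p) (auto intro: proj_cone_eight_ptsI[OF assms])
next
  fix p assume "p \<in> proj_cone eight_pts"
  then show "p \<in> {p \<in> HCF (v11,v12,v21,v22) d. fst p * fst (snd p) = 0}"
    using proj_cone_eight_ptsD by simp
qed

lemma zero_notin_HCF: "(0,0,0,0,0) \<notin> HCF v d"
  by (simp add: HCF_def split: prod.splits)

lemma to_z_boundary_iff:
  "fst (to_z w) * fst (snd (to_z w)) = 0 \<longleftrightarrow> fst (snd (snd (snd w))) * snd (snd (snd (snd w))) = 0"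
  by (simp add: to_z_def split: prod.splits)

theorem lemma5p7:
  fixes v11 v12 v21 v22 d :: complex
  assumes "v11^2 + v12^2 \<noteq> 0" and "v21^2 + v22^2 \<noteq> 0"
  shows "{p \<in> HCF (v11,v12,v21,v22) d. fst p * fst (snd p) = 0} = proj_cone eight_pts
       \<and> {w. w \<noteq> (0,0,0,0,0) \<and> to_z w \<in> HCF (v11,v12,v21,v22) d
              \<and> fst (snd (snd (snd w))) * snd (snd (snd (snd w))) = 0}
         = {w. to_z w \<in> proj_cone eight_pts}"
proof
  show boundary: "{p \<in> HCF (v11,v12,v21,v22) d. fst p * fst (snd p) = 0} = proj_cone eight_pts"
    using HCF_boundary_eq_proj_cone[OF assms] .
  show "{w. w \<noteq> (0,0,0,0,0) \<and> to_z w \<in> HCF (v11,v12,v21,v22) d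
              \<and> fst (snd (snd (snd w))) * snd (snd (snd (snd w))) = 0}
         = {w. to_z w \<in> proj_cone eight_pts}"
  proof (rule Collect_cong)
    fix w
    have "to_z (0,0,0,0,0) \<notin> HCF (v11,v12,v21,v22) d"
      using zero_notin_HCF by (simp add: to_z_def)
    moreover have "to_z w \<in> proj_cone eight_pts
        \<longleftrightarrow> to_z w \<in> HCF (v11,v12,v21,v22) d \<and> fst (to_z w) * fst (snd (to_z w)) = 0"
      by (simp only: boundary[symmetric] mem_Collect_eq)
    ultimately show "w \<noteq> (0,0,0,0,0) \<and> to_z w \<in> HCF (v11,v12,v21,v22) d
              \<and> fst (snd (snd (snd w))) * snd (snd (snd (snd w))) = 0
         \<longleftrightarrow> to_z w \<in> proj_cone eight_pts"
      using to_z_boundary_iff by metis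
  qed
qed

end
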